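(* Let $n\ge 2$ be an integer and $\alpha>1$. There exists a weighted graph $G=(\{0,\dots,n-1\},w)$ with $\mathrm{cdim}_\alpha(G)=\binom n2$.
   Context: A weighted graph $G=(V,w)$ assigns a nonnegative weight to each unordered pair of distinct vertices; its edge set is $E=\{e:w(e)>0\}$. For $\emptyset\ne X\subsetneq V$, $\Delta(X)$ is the set of edges with exactly one endpoint in $X$, of weight $w(\Delta(X))$ equal to the sum of their weights; $\lambda$ is the minimum cut weight. For $\alpha\ge1$, an $\alpha$-near-mincut is a cut of weight at most $\alpha\lambda$, $\mathcal{M}_\alpha(G)$ is the set of these, $\chi(S)\in\{0,1\}^{|E|}$ is the characteristic vector of $S$ indexed by $E$, and $\mathrm{cdim}_\alpha(G)=\dim\,\mathrm{span}\{\chi(S):S\in\mathcal{M}_\alpha(G)\}$. *)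

theory Defs
  imports "HOL-Analysis.Analysis" "HOL-Library.Function_Algebras"
begin

text \<open>Unordered pairs are 2-element sets of naturals; the weight
function is zero outside the unordered pairs of V.\<close>

definition wgraph :: "nat \<Rightarrow> (nat set \<Rightarrow> real) \<Rightarrow> bool" where
  "wgraph n w \<longleftrightarrow> (\<forall>e. w e \<ge> 0) \<and>
     (\<forall>e. w e \<noteq> 0 \<longrightarrow> e \<subseteq> {0..<n} \<and> card e = 2)"

definition edges :: "(nat set \<Rightarrow> real) \<Rightarrow> nat set set" where
  "edges w = {e. w e > 0}"

definition cut_edges :: "(nat set \<Rightarrow> real) \<Rightarrow> nat set \<Rightarrow> nat set set" where
  "cut_edges w X = {e \<in> edges w. card (e \<inter> X) = 1}"

definition cut_weight :: "(nat set \<Rightarrow> real) \<Rightarrow> nat set \<Rightarrow> real" where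
  "cut_weight w X = (\<Sum>e\<in>cut_edges w X. w e)"

definition cut_sides :: "nat \<Rightarrow> nat set set" where
  "cut_sides n = {X. X \<noteq> {} \<and> X \<subset> {0..<n}}"

definition mincut :: "nat \<Rightarrow> (nat set \<Rightarrow> real) \<Rightarrow> real" where
  "mincut n w = Min (cut_weight w ` cut_sides n)"

definition near_mincuts :: "nat \<Rightarrow> real \<Rightarrow> (nat set \<Rightarrow> real) \<Rightarrow> nat set set set" where
  "near_mincuts n \<alpha> w =
     {cut_edges w X | X. X \<in> cut_sides n \<and> cut_weight w X \<le> \<alpha> * mincut n w}"

text \<open>Characteristic vector of S, as a real-valued function on unordered pairs
(supported on S \<subseteq> E, hence effectively indexed by E).\<close>
definition charvec :: "nat set set \<Rightarrow> (nat set \<Rightarrow> real)" where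
  "charvec S = (\<lambda>e. if e \<in> S then 1 else 0)"

definition fscale :: "real \<Rightarrow> ('a \<Rightarrow> real) \<Rightarrow> ('a \<Rightarrow> real)" where
  "fscale c f = (\<lambda>x. c * f x)"

lemma vector_space_fscale: "vector_space (fscale :: real \<Rightarrow> ('a \<Rightarrow> real) \<Rightarrow> _)"
  by unfold_locales (auto simp: fscale_def algebra_simps fun_eq_iff)

definition cdim :: "nat \<Rightarrow> real \<Rightarrow> (nat set \<Rightarrow> real) \<Rightarrow> nat" where
  "cdim n \<alpha> w = vector_space.dim fscale (charvec ` near_mincuts n \<alpha> w)"

end

theory Submission
  imports Defs
begin

(* Take the n-cycle with unit weights and add a tiny weight \<epsilon> to every pair of vertices.
   Every cut crosses the cycle at least twice, so \<lambda> \<ge> 2, while the cut of an arc {l..<r} of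
   the cycle crosses it at most twice; if the \<epsilon>-parts together weigh at most 2(\<alpha> - 1),
   every arc cut is an \<alpha>-near-mincut. The arc cuts span the whole space: for a < b, the
   indicator of the pair {a,b} is -1/2 times the alternating sum of the cuts of the arcs
   [a,b], (a,b], [a,b) and (a,b), since for every other pair the four terms cancel. *)

definition pairs :: "nat \<Rightarrow> nat set set" where
  "pairs n = {e. e \<subseteq> {0..<n} \<and> card e = 2}"

lemma finite_pairs: "finite (pairs n)"
  unfolding pairs_def by (rule finite_subset[of _ "Pow {0..<n}"]) auto

lemma card_pairs: "card (pairs n) = n choose 2"
  unfolding pairs_def using n_subsets[of "{0..<n}" 2] by simp

lemma doubleton_in_pairs: "x \<noteq> y \<Longrightarrow> x < n \<Longrightarrow> y < n \<Longrightarrow> {x, y} \<in> pairs n"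
  unfolding pairs_def by auto

lemma pairsE:
  assumes "e \<in> pairs n"
  obtains x y where "e = {x, y}" "x < y" "y < n"
proof -
  obtain x y where e: "e = {x, y}" "x \<noteq> y" "x < n" "y < n"
    using assms unfolding pairs_def card_2_iff by auto
  show ?thesis
  proof (cases "x < y")
    case True
    then show ?thesis using e that by blast
  next
    case False
    then show ?thesis using e that[of y x] by (simp add: insert_commute)
  qed
qed

lemma cut_edges_subset_pairs: "edges w \<subseteq> pairs n \<Longrightarrow> cut_edges w X \<subseteq> pairs n"
  unfolding cut_edges_def by auto

lemma finite_cut_edges: "edges w \<subseteq> pairs n \<Longrightarrow> finite (cut_edges w X)"
  using cut_edges_subset_pairs finite_pairs by (rule finite_subset)

lemma cut_edges_empty: "cut_edges w {} = {}"
  by (simp add: cut_edges_def)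

lemma cut_edges_full: "edges w \<subseteq> pairs n \<Longrightarrow> cut_edges w {0..<n} = {}"
  by (auto simp: cut_edges_def pairs_def Int_absorb2)

lemma card_doubleton_Int_eq_1_iff:
  "x \<noteq> y \<Longrightarrow> card ({x, y} \<inter> X) = 1 \<longleftrightarrow> (x \<in> X) \<noteq> (y \<in> X)"
  by (cases "x \<in> X"; cases "y \<in> X") (auto simp: Int_insert_left)

lemma doubleton_in_cut_edges_iff:
  assumes "edges w = pairs n" "x \<noteq> y" "x < n" "y < n"
  shows "{x, y} \<in> cut_edges w X \<longleftrightarrow> (x \<in> X) \<noteq> (y \<in> X)"
  using assms doubleton_in_pairs card_doubleton_Int_eq_1_iff[OF assms(2)]
  unfolding cut_edges_def by auto

lemma pair_indicator_by_interval_crossings: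
  fixes x y a b :: nat
  assumes "x < y" "a < b"
  shows "(if x = a \<and> y = b then 1 else 0 :: real) = - (
      (if (x \<in> {a..<Suc b}) \<noteq> (y \<in> {a..<Suc b}) then 1 else 0)
    - (if (x \<in> {Suc a..<Suc b}) \<noteq> (y \<in> {Suc a..<Suc b}) then 1 else 0)
    - (if (x \<in> {a..<b}) \<noteq> (y \<in> {a..<b}) then 1 else 0)
    + (if (x \<in> {Suc a..<b}) \<noteq> (y \<in> {Suc a..<b}) then 1 else 0)) / 2"
  using assms by (simp split: if_split_asm if_split; linarith)

lemma charvec_doubleton_eq_interval_cuts:
  assumes E: "edges w = pairs n" and ab: "a < b" "b < n"
  shows "charvec {{a, b}} = fscale (-1/2)
    (charvec (cut_edges w {a..<Suc b}) - charvec (cut_edges w {Suc a..<Suc b})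
     - charvec (cut_edges w {a..<b}) + charvec (cut_edges w {Suc a..<b}))"
proof
  fix e
  show "charvec {{a, b}} e = fscale (-1/2)
    (charvec (cut_edges w {a..<Suc b}) - charvec (cut_edges w {Suc a..<Suc b})
     - charvec (cut_edges w {a..<b}) + charvec (cut_edges w {Suc a..<b})) e"
  proof (cases "e \<in> pairs n")
    case False
    then have "e \<noteq> {a, b}" using ab doubleton_in_pairs[of a b n] by auto
    then show ?thesis using False cut_edges_subset_pairs[of w n] E
      by (auto simp: fscale_def charvec_def)
  next
    case True
    then obtain x y where e: "e = {x, y}" "x < y" "y < n" by (rule pairsE)
    have "{x, y} = {a, b} \<longleftrightarrow> x = a \<and> y = b"
      using e(2) ab(1) by (metis doubleton_eq_iff less_asym)
    then have pair_value: "charvec {{a, b}} {x, y} = (if x = a \<and> y = b then 1 else 0)"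
      by (simp add: charvec_def)
    have cut_value: "charvec (cut_edges w X) {x, y} = (if (x \<in> X) \<noteq> (y \<in> X) then 1 else 0)"
      for X using doubleton_in_cut_edges_iff[OF E, of x y X] e by (simp add: charvec_def)
    show ?thesis
      unfolding e(1) fscale_def minus_apply plus_fun_apply cut_value pair_value
      using pair_indicator_by_interval_crossings[OF e(2) ab(1)] by linarith
  qed
qed

interpretation fscale: vector_space "fscale :: real \<Rightarrow> (nat set \<Rightarrow> real) \<Rightarrow> _"
  by (rule vector_space_fscale)

lemma sum_fun_apply: "(\<Sum>x\<in>A. f x) y = (\<Sum>x\<in>A. f x y :: real)"
  by (induction A rule: infinite_finite_induct) auto

lemma charvec_singleton: "charvec {e} x = (if x = e then 1 else 0)"
  by (auto simp: charvec_def)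

lemma inj_charvec_singleton: "inj (\<lambda>e. charvec {e})"
  by (rule injI) (metis charvec_singleton zero_neq_one)

lemma charvec_eq_sum_singletons: "finite C \<Longrightarrow> charvec C = (\<Sum>e\<in>C. charvec {e})"
  by (rule ext) (simp add: sum_fun_apply charvec_singleton charvec_def)

lemma independent_charvec_singletons: "fscale.independent ((\<lambda>e. charvec {e}) ` A)"
  unfolding fscale.independent_explicit_module
proof (intro allI impI)
  fix t u v
  assume t: "finite t" "t \<subseteq> (\<lambda>e. charvec {e}) ` A"
    and comb: "(\<Sum>v\<in>t. fscale (u v) v) = 0" and v: "v \<in> t"
  obtain e where e: "v = charvec {e}" using v t by auto
  have "v' e = (if v' = v then 1 else 0)" if v': "v' \<in> t" for v'
  proof -
    obtain e' where e': "v' = charvec {e'}" using v' t by auto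
    have "v' = v \<longleftrightarrow> e = e'"
      unfolding e e' using inj_charvec_singleton by (auto dest: injD)
    then show ?thesis unfolding e' charvec_singleton by simp
  qed
  then have "(\<Sum>v\<in>t. fscale (u v) v) e = (\<Sum>v'\<in>t. u v' * (if v' = v then 1 else 0))"
    unfolding sum_fun_apply fscale_def by (intro sum.cong) auto
  also have "\<dots> = u v"
    using t(1) v by (simp add: if_distrib cong: if_cong)
  finally show "u v = 0" using comb by simp
qed

lemma interval_cut_in_span_near_mincuts:
  assumes E: "edges w = pairs n" and r: "r \<le> n"
    and near: "{l..<r} \<in> cut_sides n \<Longrightarrow> cut_weight w {l..<r} \<le> \<alpha> * mincut n w"
  shows "charvec (cut_edges w {l..<r}) \<in> fscale.span (charvec ` near_mincuts n \<alpha> w)"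
proof (cases "{l..<r} \<in> cut_sides n")
  case True
  then have "cut_edges w {l..<r} \<in> near_mincuts n \<alpha> w"
    using near unfolding near_mincuts_def by blast
  then show ?thesis by (intro fscale.span_base imageI)
next
  case False
  then have "{l..<r} = {} \<or> {l..<r} = {0..<n}"
    using r unfolding cut_sides_def by auto
  then have "charvec (cut_edges w {l..<r}) = 0"
    using cut_edges_empty cut_edges_full[of w n] E by (auto simp: charvec_def)
  then show ?thesis using fscale.span_zero by simp
qed

lemma cdim_eq_choose_if_interval_cuts_near_minimal:
  assumes E: "edges w = pairs n"
    and near: "\<And>l r. {l..<r} \<in> cut_sides n \<Longrightarrow> cut_weight w {l..<r} \<le> \<alpha> * mincut n w"
  shows "cdim n \<alpha> w = n choose 2"
proof -
  let ?S = "charvec ` near_mincuts n \<alpha> w"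
  let ?B = "(\<lambda>e. charvec {e}) ` pairs n"
  have interval: "charvec (cut_edges w {l..<r}) \<in> fscale.span ?S" if "r \<le> n" for l r
    using interval_cut_in_span_near_mincuts[OF E that near] .
  have "charvec {e} \<in> fscale.span ?S" if "e \<in> pairs n" for e
  proof -
    obtain a b where ab: "e = {a, b}" "a < b" "b < n" using \<open>e \<in> pairs n\<close> by (rule pairsE)
    show ?thesis
      unfolding ab(1) charvec_doubleton_eq_interval_cuts[OF E ab(2,3)]
      using ab by (intro fscale.span_scale fscale.span_add fscale.span_diff interval) auto
  qed
  then have B_S: "?B \<subseteq> fscale.span ?S" by blast
  have "charvec C \<in> fscale.span ?B" if "C \<in> near_mincuts n \<alpha> w" for C
  proof -
    have C: "C \<subseteq> pairs n" "finite C"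
      using that cut_edges_subset_pairs[of w n] finite_cut_edges[of w n] E
      unfolding near_mincuts_def by auto
    then have "(\<Sum>e\<in>C. charvec {e}) \<in> fscale.span ?B"
      by (intro fscale.span_sum fscale.span_base) auto
    then show ?thesis using charvec_eq_sum_singletons[OF C(2)] by simp
  qed
  then have S_B: "?S \<subseteq> fscale.span ?B" by blast
  have "fscale.dim ?S = fscale.dim ?B"
    using B_S S_B by (intro fscale.span_eq_dim) (simp add: fscale.span_eq)
  also have "\<dots> = card ?B"
    by (rule fscale.dim_eq_card_independent[OF independent_charvec_singletons])
  also have "\<dots> = n choose 2"
    using card_image[OF inj_on_subset[OF inj_charvec_singleton]] card_pairs by simp
  finally show ?thesis unfolding cdim_def .
qed

definition cycle_edge :: "nat \<Rightarrow> nat \<Rightarrow> nat set" where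
  "cycle_edge n i = {i, Suc i mod n}"

definition crossings :: "nat \<Rightarrow> nat set \<Rightarrow> nat set" where
  "crossings n X = {i. i < n \<and> (i \<in> X) \<noteq> (Suc i mod n \<in> X)}"

lemma cycle_edge_in_cut_edges_iff:
  assumes E: "edges w = pairs n" and n: "2 \<le> n" and i: "i < n"
  shows "cycle_edge n i \<in> cut_edges w X \<longleftrightarrow> i \<in> crossings n X"
proof -
  have "Suc i mod n \<noteq> i" using n i by (simp add: mod_Suc)
  then show ?thesis
    using doubleton_in_cut_edges_iff[OF E, of i "Suc i mod n" X] i n
    unfolding cycle_edge_def crossings_def by simp
qed

lemma cyclic_closed_imp_subset:
  assumes "x \<in> X" "x < n" and step: "\<And>i. i < n \<Longrightarrow> i \<in> X \<Longrightarrow> Suc i mod n \<in> X"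
  shows "{0..<n} \<subseteq> X"
proof -
  have "(x + k) mod n \<in> X" for k
  proof (induction k)
    case 0
    then show ?case using assms(1,2) by simp
  next
    case (Suc k)
    have "Suc ((x + k) mod n) mod n \<in> X"
      using step Suc.IH assms(2) by simp
    then show ?case by (simp add: mod_Suc_eq)
  qed
  moreover have "(x + (n - x + y)) mod n = y" if "y < n" for y
    using that assms(2) by simp
  ultimately show ?thesis by (metis atLeastLessThan_iff subsetI)
qed

lemma cut_side_exit:
  assumes "X \<in> cut_sides n"
  obtains i where "i < n" "i \<in> X" "Suc i mod n \<notin> X"
proof (rule ccontr)
  assume "\<not> thesis"
  then have step: "\<And>i. i < n \<Longrightarrow> i \<in> X \<Longrightarrow> Suc i mod n \<in> X" using that by blast
  obtain x where "x \<in> X" "x < n" using assms unfolding cut_sides_def by fastforce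
  then have "{0..<n} \<subseteq> X" using step by (rule cyclic_closed_imp_subset)
  then show False using assms unfolding cut_sides_def by auto
qed

lemma two_le_card_crossings:
  assumes X: "X \<in> cut_sides n"
  shows "2 \<le> card (crossings n X)"
proof -
  have "{0..<n} - X \<in> cut_sides n" using X unfolding cut_sides_def by auto
  then obtain j where j: "j < n" "j \<notin> X" "Suc j mod n \<in> X"
    by (rule cut_side_exit) auto
  obtain i where i: "i < n" "i \<in> X" "Suc i mod n \<notin> X" using X by (rule cut_side_exit)
  have "{i, j} \<subseteq> crossings n X" using i j unfolding crossings_def by auto
  moreover have "i \<noteq> j" using i j by auto
  ultimately show ?thesis
    using card_mono[of "crossings n X" "{i, j}"] unfolding crossings_def by simp
qed

lemma crossings_interval_subset:
  assumes "r \<le> n"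
  shows "crossings n {l..<r} \<subseteq> {(l + n - 1) mod n, r - 1}"
proof
  fix i assume "i \<in> crossings n {l..<r}"
  then have i: "i < n" and cross: "(i \<in> {l..<r}) \<noteq> (Suc i mod n \<in> {l..<r})"
    unfolding crossings_def by auto
  show "i \<in> {(l + n - 1) mod n, r - 1}"
  proof (cases "Suc i < n")
    case True
    then have "Suc i = l \<or> Suc i = r" using cross by auto
    then show ?thesis using i by auto
  next
    case False
    then have "i = n - 1" using i by simp
    then show ?thesis using cross assms i by auto
  qed
qed

lemma card_crossings_interval_le:
  assumes "r \<le> n"
  shows "card (crossings n {l..<r}) \<le> 2"
proof -
  have "card (crossings n {l..<r}) \<le> card {(l + n - 1) mod n, r - 1}"
    by (rule card_mono[OF _ crossings_interval_subset[OF assms]]) simp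
  also have "\<dots> \<le> 2" by (simp add: card_insert_if)
  finally show ?thesis .
qed

text \<open>For n = 2 the two cycle edges coincide, so {0,1} is counted twice; this keeps the minimum
  cut at least 2 for every n.\<close>
definition cycle_clique_weight :: "nat \<Rightarrow> real \<Rightarrow> nat set \<Rightarrow> real" where
  "cycle_clique_weight n \<epsilon> e =
     (if e \<in> pairs n then real (card {i. i < n \<and> cycle_edge n i = e}) + \<epsilon> else 0)"

lemma wgraph_cycle_clique_weight: "0 \<le> \<epsilon> \<Longrightarrow> wgraph n (cycle_clique_weight n \<epsilon>)"
  unfolding wgraph_def cycle_clique_weight_def pairs_def by auto

lemma edges_cycle_clique_weight: "0 < \<epsilon> \<Longrightarrow> edges (cycle_clique_weight n \<epsilon>) = pairs n"
  unfolding edges_def cycle_clique_weight_def by auto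

lemma cut_weight_cycle_clique_weight:
  assumes n: "2 \<le> n" and \<epsilon>: "0 < \<epsilon>"
  defines "w \<equiv> cycle_clique_weight n \<epsilon>"
  shows "cut_weight w X = real (card (crossings n X)) + \<epsilon> * real (card (cut_edges w X))"
proof -
  let ?C = "cut_edges w X" and ?I = "{i. i < n \<and> cycle_edge n i \<in> cut_edges w X}"
  have E: "edges w = pairs n" unfolding w_def using \<epsilon> by (rule edges_cycle_clique_weight)
  have C: "?C \<subseteq> pairs n" "finite ?C"
    using cut_edges_subset_pairs[of w n] finite_cut_edges[of w n] E by auto
  have "(\<Sum>e\<in>?C. card {i. i < n \<and> cycle_edge n i = e}) = (\<Sum>e\<in>?C. card {i \<in> ?I. cycle_edge n i = e})"
    by (intro sum.cong refl arg_cong[where f = card]) auto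
  also have "\<dots> = card ?I"
    using sum.group[of ?I ?C "cycle_edge n" "\<lambda>_. 1 :: nat"] C(2) by auto
  also have "?I = crossings n X"
    using cycle_edge_in_cut_edges_iff[OF E n] unfolding crossings_def by blast
  finally have count: "(\<Sum>e\<in>?C. real (card {i. i < n \<and> cycle_edge n i = e})) = card (crossings n X)"
    by (simp flip: of_nat_sum)
  have "cut_weight w X = (\<Sum>e\<in>?C. real (card {i. i < n \<and> cycle_edge n i = e}) + \<epsilon>)"
    using C(1) unfolding cut_weight_def w_def cycle_clique_weight_def by (intro sum.cong) auto
  then show ?thesis by (simp add: sum.distrib count)
qed

lemma le_mincut:
  assumes "cut_sides n \<noteq> {}" and "\<And>X. X \<in> cut_sides n \<Longrightarrow> c \<le> cut_weight w X"
  shows "c \<le> mincut n w"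
proof -
  have "finite (cut_sides n)"
    by (rule finite_subset[of _ "Pow {0..<n}"]) (auto simp: cut_sides_def)
  then show ?thesis unfolding mincut_def using assms by (simp add: Min_ge_iff)
qed

lemma singleton_in_cut_sides: "2 \<le> n \<Longrightarrow> {0} \<in> cut_sides n"
proof -
  assume "2 \<le> n"
  then have "0 \<in> {0..<n}" "1 \<in> {0..<n} - {0}" by auto
  then show ?thesis unfolding cut_sides_def by blast
qed

lemma two_le_mincut_cycle_clique_weight:
  assumes n: "2 \<le> n" and \<epsilon>: "0 < \<epsilon>"
  shows "2 \<le> mincut n (cycle_clique_weight n \<epsilon>)"
proof (rule le_mincut)
  show "cut_sides n \<noteq> {}" using singleton_in_cut_sides[OF n] by blast
  fix X assume "X \<in> cut_sides n"
  then have "2 \<le> real (card (crossings n X))" using two_le_card_crossings by simp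
  moreover have "0 \<le> \<epsilon> * card (cut_edges (cycle_clique_weight n \<epsilon>) X)" using \<epsilon> by simp
  ultimately show "2 \<le> cut_weight (cycle_clique_weight n \<epsilon>) X"
    unfolding cut_weight_cycle_clique_weight[OF n \<epsilon>] by linarith
qed

lemma cut_weight_interval_cycle_clique_weight_le:
  assumes n: "2 \<le> n" and \<epsilon>: "0 < \<epsilon>" and r: "r \<le> n"
  shows "cut_weight (cycle_clique_weight n \<epsilon>) {l..<r} \<le> 2 + \<epsilon> * (n choose 2)"
proof -
  let ?w = "cycle_clique_weight n \<epsilon>"
  have "card (cut_edges ?w {l..<r}) \<le> card (pairs n)"
    using card_mono[OF finite_pairs cut_edges_subset_pairs] edges_cycle_clique_weight[OF \<epsilon>] by simp
  then have "\<epsilon> * card (cut_edges ?w {l..<r}) \<le> \<epsilon> * (n choose 2)"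
    using \<epsilon> by (simp add: card_pairs)
  moreover have "real (card (crossings n {l..<r})) \<le> 2"
    using card_crossings_interval_le[OF r] by simp
  ultimately show ?thesis unfolding cut_weight_cycle_clique_weight[OF n \<epsilon>] by linarith
qed

theorem mainTheorem18:
  fixes n :: nat and \<alpha> :: real
  assumes "n \<ge> 2" and "\<alpha> > 1"
  shows "\<exists>w. wgraph n w \<and> cdim n \<alpha> w = n choose 2"
proof -
  define \<epsilon> where "\<epsilon> = 2 * (\<alpha> - 1) / (n choose 2)"
  define w where "w = cycle_clique_weight n \<epsilon>"
  have "0 < real (n choose 2)" using assms(1) by simp
  then have \<epsilon>: "0 < \<epsilon>" and \<epsilon>_total: "\<epsilon> * (n choose 2) = 2 * (\<alpha> - 1)"
    using assms(2) unfolding \<epsilon>_def by (simp_all add: field_simps)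
  have "cdim n \<alpha> w = n choose 2"
  proof (rule cdim_eq_choose_if_interval_cuts_near_minimal)
    show "edges w = pairs n" unfolding w_def using \<epsilon> by (rule edges_cycle_clique_weight)
    fix l r assume "{l..<r} \<in> cut_sides n"
    then have "r \<le> n" unfolding cut_sides_def by auto
    with assms(1) \<epsilon> have "cut_weight w {l..<r} \<le> 2 + \<epsilon> * (n choose 2)"
      unfolding w_def by (rule cut_weight_interval_cycle_clique_weight_le)
    also have "\<dots> = \<alpha> * 2" using \<epsilon>_total by simp
    also have "\<dots> \<le> \<alpha> * mincut n w"
      using two_le_mincut_cycle_clique_weight[OF assms(1) \<epsilon>] assms(2) unfolding w_def by simp
    finally show "cut_weight w {l..<r} \<le> \<alpha> * mincut n w" .
  qed
  moreover have "wgraph n w" unfolding w_def using \<epsilon> by (simp add: wgraph_cycle_clique_weight)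
  ultimately show ?thesis by blast
qed

end
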